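(* In the setting described in the context, the following three conditions are equivalent: (1) there exists a capacity $\mu:2^{\mathcal C}\to L$ representing the training data, i.e. $S_\mu(x^{(k)})=\alpha^{(k)}$ for all $k\in\{1,\dots,N\}$; (2) the max–min system $(S)$ is consistent and $e(\mathcal C)=1$; (3) the min–max system $(\Sigma)$ is consistent and $f(\emptyset)=0$.
   Context: Let $\mathcal C=\{1,\dots,n\}$ and let $L$ be either a finite totally ordered set $0=\xi_1<\dots<\xi_l=1$ or $L=[0,1]$. A capacity is a map $\mu:2^{\mathcal C}\to L$ with $\mu(\emptyset)=0$, $\mu(\mathcal C)=1$, and $A\subseteq B\Rightarrow\mu(A)\le\mu(B)$. The Sugeno integral of $x\in L^n$ is $S_\mu(x)=\max_{A\subseteq\mathcal C}\min(\min_{i\in A}x_i,\mu(A))$ with $\min_{i\in\emptyset}x_i=1$. Training data: $N$ pairs $(x^{(k)},\alpha^{(k)})$ with $x^{(k)}\in L^n$, $\alpha^{(k)}\in L$. For nonempty $A$, $m_{k,A}=\min_{i\in A}x^{(k)}_i$; for $A\subsetneq\mathcal C$, $\gamma_{k,A}=\max_{i\in\mathcal C\setminus A}x^{(k)}_i$. The system $(S)$ has unknowns $\xi_A\in L$, $A\subseteq\mathcal C$ nonempty, and equations $\max_{A\neq\emptyset}\min(m_{k,A},\xi_A)=\alpha^{(k)}$ for $k=1,\dots,N$. The system $(\Sigma)$ has unknowns $\xi_A\in L$, $A\subsetneq\mathcal C$, and equations $\min_{A\subsetneq\mathcal C}\max(\gamma_{k,A},\xi_A)=\alpha^{(k)}$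 for $k=1,\dots,N$. A system is consistent if it has a solution in $L$. Gödel implication: $a\to_G b=1$ if $a\le b$, else $b$; epsilon product: $a\,\epsilon\,b=b$ if $a<b$, else $0$. Set $e(A)=\min_{k}(m_{k,A}\to_G\alpha^{(k)})$ for nonempty $A$ and $f(B)=\max_k(\gamma_{k,B}\,\epsilon\,\alpha^{(k)})$ for $B\subsetneq\mathcal C$. *)

theory Defs
  imports Complex_Main
begin

definition scale :: "real set \<Rightarrow> bool" where
  "scale L \<longleftrightarrow> (finite L \<and> L \<subseteq> {0..1} \<and> 0 \<in> L \<and> 1 \<in> L) \<or> L = {0..1}"

abbreviation crit :: "nat \<Rightarrow> nat set" where
  "crit n \<equiv> {1..n}"

definition capacity :: "real set \<Rightarrow> nat \<Rightarrow> (nat set \<Rightarrow> real) \<Rightarrow> bool" where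
  "capacity L n \<mu> \<longleftrightarrow>
     (\<forall>A. A \<subseteq> crit n \<longrightarrow> \<mu> A \<in> L) \<and> \<mu> {} = 0 \<and> \<mu> (crit n) = 1 \<and>
     (\<forall>A B. A \<subseteq> B \<longrightarrow> B \<subseteq> crit n \<longrightarrow> \<mu> A \<le> \<mu> B)"

definition minover :: "(nat \<Rightarrow> real) \<Rightarrow> nat set \<Rightarrow> real" where
  "minover x A = (if A = {} then 1 else Min (x ` A))"

definition sugeno :: "nat \<Rightarrow> (nat set \<Rightarrow> real) \<Rightarrow> (nat \<Rightarrow> real) \<Rightarrow> real" where
  "sugeno n \<mu> x = Max ((\<lambda>A. min (minover x A) (\<mu> A)) ` Pow (crit n))"

text \<open>m_{k,A} for nonempty A, gamma_{k,A} for A a proper subset of C.\<close>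
definition mkA :: "(nat \<Rightarrow> nat \<Rightarrow> real) \<Rightarrow> nat \<Rightarrow> nat set \<Rightarrow> real" where
  "mkA x k A = Min (x k ` A)"

definition gammakA :: "nat \<Rightarrow> (nat \<Rightarrow> nat \<Rightarrow> real) \<Rightarrow> nat \<Rightarrow> nat set \<Rightarrow> real" where
  "gammakA n x k A = Max (x k ` (crit n - A))"

definition S_consistent ::
  "real set \<Rightarrow> nat \<Rightarrow> nat \<Rightarrow> (nat \<Rightarrow> nat \<Rightarrow> real) \<Rightarrow> (nat \<Rightarrow> real) \<Rightarrow> bool" where
  "S_consistent L n N x \<alpha> \<longleftrightarrow>
     (\<exists>\<xi> :: nat set \<Rightarrow> real.
        (\<forall>A. A \<subseteq> crit n \<and> A \<noteq> {} \<longrightarrow> \<xi> A \<in> L) \<and>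
        (\<forall>k\<in>{1..N}. Max ((\<lambda>A. min (mkA x k A) (\<xi> A)) ` {A. A \<subseteq> crit n \<and> A \<noteq> {}}) = \<alpha> k))"

definition Sigma_consistent ::
  "real set \<Rightarrow> nat \<Rightarrow> nat \<Rightarrow> (nat \<Rightarrow> nat \<Rightarrow> real) \<Rightarrow> (nat \<Rightarrow> real) \<Rightarrow> bool" where
  "Sigma_consistent L n N x \<alpha> \<longleftrightarrow>
     (\<exists>\<xi> :: nat set \<Rightarrow> real.
        (\<forall>A. A \<subset> crit n \<longrightarrow> \<xi> A \<in> L) \<and>
        (\<forall>k\<in>{1..N}. Min ((\<lambda>A. max (gammakA n x k A) (\<xi> A)) ` {A. A \<subset> crit n}) = \<alpha> k))"

definition goedel_imp :: "real \<Rightarrow> real \<Rightarrow> real" where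
  "goedel_imp a b = (if a \<le> b then 1 else b)"

definition eps_prod :: "real \<Rightarrow> real \<Rightarrow> real" where
  "eps_prod a b = (if a < b then b else 0)"

definition e_fun :: "nat \<Rightarrow> (nat \<Rightarrow> nat \<Rightarrow> real) \<Rightarrow> (nat \<Rightarrow> real) \<Rightarrow> nat set \<Rightarrow> real" where
  "e_fun N x \<alpha> A = Min ((\<lambda>k. goedel_imp (mkA x k A) (\<alpha> k)) ` {1..N})"

definition f_fun :: "nat \<Rightarrow> nat \<Rightarrow> (nat \<Rightarrow> nat \<Rightarrow> real) \<Rightarrow> (nat \<Rightarrow> real) \<Rightarrow> nat set \<Rightarrow> real" where
  "f_fun n N x \<alpha> B = Max ((\<lambda>k. eps_prod (gammakA n x k B) (\<alpha> k)) ` {1..N})"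

end

theory Submission
  imports Defs
begin

text \<open>For a capacity \<mu> the Sugeno integral has a max-min form over the nonempty subsets of
  criteria and, dually, a min-max form over the proper subsets. Hence a capacity represents the
  data iff it restricts to a solution of (S), and iff it restricts to a solution of (\<Sigma>).
  By Sanchez' theorem a consistent max-min system has the greatest solution e, the Goedel
  residual of the data, and a consistent min-max system the least solution f, the residual
  for the epsilon product. Both are monotone because m is antitone and \<gamma> is antitone in the set,
  so extending e by \<mu>(\<emptyset>) = 0, resp. f by \<mu>(C) = 1, gives a capacity exactly when
  e(C) = 1, resp. f(\<emptyset>) = 0. Conversely a representing capacity forces m(k,C) \<le> \<alpha>(k)
  and \<alpha>(k) \<le> \<gamma>(k,\<emptyset>), which say e(C) = 1 and f(\<emptyset>) = 0.\<close>

lemma goedel_imp_adjoint: "c \<le> 1 \<Longrightarrow> c \<le> goedel_imp a b \<longleftrightarrow> min a c \<le> b"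
  by (auto simp: goedel_imp_def)

lemma min_goedel_imp_le: "min a (goedel_imp a b) \<le> b"
  by (auto simp: goedel_imp_def)

lemma goedel_imp_antimono: "a' \<le> a \<Longrightarrow> b \<le> 1 \<Longrightarrow> goedel_imp a b \<le> goedel_imp a' b"
  by (auto simp: goedel_imp_def)

lemma eps_prod_adjoint: "0 \<le> c \<Longrightarrow> eps_prod a b \<le> c \<longleftrightarrow> b \<le> max a c"
  by (auto simp: eps_prod_def)

lemma le_max_eps_prod: "b \<le> max a (eps_prod a b)"
  by (auto simp: eps_prod_def)

lemma eps_prod_antimono: "a' \<le> a \<Longrightarrow> 0 \<le> b \<Longrightarrow> eps_prod a b \<le> eps_prod a' b"
  by (auto simp: eps_prod_def)

definition goedel_residual :: "'k set \<Rightarrow> ('k \<Rightarrow> 'u \<Rightarrow> real) \<Rightarrow> ('k \<Rightarrow> real) \<Rightarrow> 'u \<Rightarrow> real"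
  where "goedel_residual K a \<alpha> A = Min ((\<lambda>k. goedel_imp (a k A) (\<alpha> k)) ` K)"

definition eps_residual :: "'k set \<Rightarrow> ('k \<Rightarrow> 'u \<Rightarrow> real) \<Rightarrow> ('k \<Rightarrow> real) \<Rightarrow> 'u \<Rightarrow> real"
  where "eps_residual K a \<alpha> B = Max ((\<lambda>k. eps_prod (a k B) (\<alpha> k)) ` K)"

lemma e_fun_eq_goedel_residual: "e_fun N x \<alpha> = goedel_residual {1..N} (mkA x) \<alpha>"
  by (auto simp: e_fun_def goedel_residual_def)

lemma f_fun_eq_eps_residual: "f_fun n N x \<alpha> = eps_residual {1..N} (gammakA n x) \<alpha>"
  by (auto simp: f_fun_def eps_residual_def)

lemma goedel_residual_mem:
  assumes "finite K" "K \<noteq> {}" "\<forall>k\<in>K. \<alpha> k \<in> S" "1 \<in> S"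
  shows "goedel_residual K a \<alpha> A \<in> S"
proof -
  have "goedel_residual K a \<alpha> A \<in> (\<lambda>k. goedel_imp (a k A) (\<alpha> k)) ` K"
    unfolding goedel_residual_def using assms(1,2) by (intro Min_in) auto
  then obtain k where "k \<in> K" "goedel_residual K a \<alpha> A = goedel_imp (a k A) (\<alpha> k)"
    by blast
  with assms(3,4) show ?thesis by (auto simp: goedel_imp_def)
qed

lemma eps_residual_mem:
  assumes "finite K" "K \<noteq> {}" "\<forall>k\<in>K. \<alpha> k \<in> S" "0 \<in> S"
  shows "eps_residual K a \<alpha> B \<in> S"
proof -
  have "eps_residual K a \<alpha> B \<in> (\<lambda>k. eps_prod (a k B) (\<alpha> k)) ` K"
    unfolding eps_residual_def using assms(1,2) by (intro Max_in) auto
  then obtain k where "k \<in> K" "eps_residual K a \<alpha> B = eps_prod (a k B) (\<alpha> k)"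
    by blast
  with assms(3,4) show ?thesis by (auto simp: eps_prod_def)
qed

lemma goedel_residual_mono:
  assumes "finite K" "K \<noteq> {}" "\<forall>k\<in>K. a k B \<le> a k A \<and> \<alpha> k \<le> 1"
  shows "goedel_residual K a \<alpha> A \<le> goedel_residual K a \<alpha> B"
  unfolding goedel_residual_def using assms
  by (intro Min.boundedI) (auto intro: order_trans[OF Min_le goedel_imp_antimono])

lemma eps_residual_mono:
  assumes "finite K" "K \<noteq> {}" "\<forall>k\<in>K. a k B \<le> a k A \<and> 0 \<le> \<alpha> k"
  shows "eps_residual K a \<alpha> A \<le> eps_residual K a \<alpha> B"
  unfolding eps_residual_def using assms
  by (intro Max.boundedI) (auto intro: order_trans[OF eps_prod_antimono Max_ge])

lemma max_min_solution_le_goedel_residual: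
  assumes "finite P" "finite K" "K \<noteq> {}"
    and sol: "\<forall>k\<in>K. Max ((\<lambda>A. min (a k A) (\<xi> A)) ` P) = \<alpha> k"
    and "A \<in> P" "\<xi> A \<le> 1"
  shows "\<xi> A \<le> goedel_residual K a \<alpha> A"
proof -
  have "min (a k A) (\<xi> A) \<le> \<alpha> k" if "k \<in> K" for k
  proof -
    have "min (a k A) (\<xi> A) \<le> Max ((\<lambda>A. min (a k A) (\<xi> A)) ` P)"
      using assms by (intro Max_ge) auto
    also have "\<dots> = \<alpha> k" using sol that by simp
    finally show ?thesis .
  qed
  then show ?thesis
    unfolding goedel_residual_def using assms by (intro Min.boundedI) (auto simp: goedel_imp_adjoint)
qed

theorem goedel_residual_greatest_max_min_solution:
  assumes "finite P" "P \<noteq> {}" "finite K" "K \<noteq> {}"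
    and sol: "\<forall>k\<in>K. Max ((\<lambda>A. min (a k A) (\<xi> A)) ` P) = \<alpha> k"
    and le_1: "\<forall>A\<in>P. \<xi> A \<le> 1"
  shows "\<forall>k\<in>K. Max ((\<lambda>A. min (a k A) (goedel_residual K a \<alpha> A)) ` P) = \<alpha> k"
proof
  fix k assume k: "k \<in> K"
  let ?e = "goedel_residual K a \<alpha>"
  let ?M = "Max ((\<lambda>A. min (a k A) (?e A)) ` P)"
  have e_le: "?e A \<le> goedel_imp (a k A) (\<alpha> k)" for A
    unfolding goedel_residual_def using k \<open>finite K\<close> by (intro Min_le) auto
  have "min (a k A) (?e A) \<le> \<alpha> k" for A
    by (rule order_trans[OF min.mono[OF order_refl e_le] min_goedel_imp_le])
  then have upper: "?M \<le> \<alpha> k"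
    using assms(1,2) by (intro Max.boundedI) auto
  have "Max ((\<lambda>A. min (a k A) (\<xi> A)) ` P) \<in> (\<lambda>A. min (a k A) (\<xi> A)) ` P"
    using assms(1,2) by (intro Max_in) auto
  then obtain A where A: "A \<in> P" "\<alpha> k = min (a k A) (\<xi> A)"
    using sol k by auto
  have "\<alpha> k \<le> min (a k A) (?e A)"
    using max_min_solution_le_goedel_residual[OF assms(1,3,4) sol A(1)] le_1 A by fastforce
  also have "\<dots> \<le> ?M"
    using assms(1) A(1) by (intro Max_ge) auto
  finally show "?M = \<alpha> k" using upper by linarith
qed

lemma eps_residual_le_min_max_solution:
  assumes "finite Q" "finite K" "K \<noteq> {}"
    and sol: "\<forall>k\<in>K. Min ((\<lambda>B. max (a k B) (\<xi> B)) ` Q) = \<alpha> k"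
    and "B \<in> Q" "0 \<le> \<xi> B"
  shows "eps_residual K a \<alpha> B \<le> \<xi> B"
proof -
  have "\<alpha> k \<le> max (a k B) (\<xi> B)" if "k \<in> K" for k
  proof -
    have "\<alpha> k = Min ((\<lambda>B. max (a k B) (\<xi> B)) ` Q)" using sol that by simp
    also have "\<dots> \<le> max (a k B) (\<xi> B)"
      using assms by (intro Min_le) auto
    finally show ?thesis .
  qed
  then show ?thesis
    unfolding eps_residual_def using assms by (intro Max.boundedI) (auto simp: eps_prod_adjoint)
qed

theorem eps_residual_least_min_max_solution:
  assumes "finite Q" "Q \<noteq> {}" "finite K" "K \<noteq> {}"
    and sol: "\<forall>k\<in>K. Min ((\<lambda>B. max (a k B) (\<xi> B)) ` Q) = \<alpha> k"
    and ge_0: "\<forall>B\<in>Q. 0 \<le> \<xi> B"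
  shows "\<forall>k\<in>K. Min ((\<lambda>B. max (a k B) (eps_residual K a \<alpha> B)) ` Q) = \<alpha> k"
proof
  fix k assume k: "k \<in> K"
  let ?f = "eps_residual K a \<alpha>"
  let ?M = "Min ((\<lambda>B. max (a k B) (?f B)) ` Q)"
  have f_ge: "eps_prod (a k B) (\<alpha> k) \<le> ?f B" for B
    unfolding eps_residual_def using k \<open>finite K\<close> by (intro Max_ge) auto
  have "\<alpha> k \<le> max (a k B) (?f B)" for B
    by (rule order_trans[OF le_max_eps_prod max.mono[OF order_refl f_ge]])
  then have lower: "\<alpha> k \<le> ?M"
    using assms(1,2) by (intro Min.boundedI) auto
  have "Min ((\<lambda>B. max (a k B) (\<xi> B)) ` Q) \<in> (\<lambda>B. max (a k B) (\<xi> B)) ` Q"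
    using assms(1,2) by (intro Min_in) auto
  then obtain B where B: "B \<in> Q" "\<alpha> k = max (a k B) (\<xi> B)"
    using sol k by auto
  have "?M \<le> max (a k B) (?f B)"
    using assms(1) B(1) by (intro Min_le) auto
  also have "\<dots> \<le> \<alpha> k"
    using eps_residual_le_min_max_solution[OF assms(1,3,4) sol B(1)] ge_0 B by fastforce
  finally show "?M = \<alpha> k" using lower by linarith
qed

lemma capacity_crit_nonempty: "capacity L n \<mu> \<Longrightarrow> crit n \<noteq> {}"
  by (metis capacity_def zero_neq_one)

lemma capacity_mono: "capacity L n \<mu> \<Longrightarrow> A \<subseteq> B \<Longrightarrow> B \<subseteq> crit n \<Longrightarrow> \<mu> A \<le> \<mu> B"
  unfolding capacity_def by blast

lemma capacity_nonneg: "capacity L n \<mu> \<Longrightarrow> A \<subseteq> crit n \<Longrightarrow> 0 \<le> \<mu> A"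
  using capacity_mono[of L n \<mu> "{}" A] by (simp add: capacity_def)

lemma min_minover_le_sugeno: "A \<subseteq> crit n \<Longrightarrow> min (minover y A) (\<mu> A) \<le> sugeno n \<mu> y"
  unfolding sugeno_def by (rule Max_ge) auto

lemma sugeno_attained:
  obtains A where "A \<subseteq> crit n" "sugeno n \<mu> y = min (minover y A) (\<mu> A)"
proof -
  have "sugeno n \<mu> y \<in> (\<lambda>A. min (minover y A) (\<mu> A)) ` Pow (crit n)"
    unfolding sugeno_def by (rule Max_in) auto
  with that show ?thesis by blast
qed

lemma sugeno_eq_Max_nonempty:
  assumes cap: "capacity L n \<mu>" and y: "\<forall>i\<in>crit n. 0 \<le> y i"
  shows "sugeno n \<mu> y = Max ((\<lambda>A. min (Min (y ` A)) (\<mu> A)) ` {A. A \<subseteq> crit n \<and> A \<noteq> {}})"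
    (is "_ = Max (?g ` ?P)")
proof -
  have C: "crit n \<in> ?P" using capacity_crit_nonempty[OF cap] by blast
  have "0 \<le> ?g (crit n)"
    using y capacity_crit_nonempty[OF cap] capacity_nonneg[OF cap, of "crit n"]
    by simp
  also have "\<dots> \<le> Max (?g ` ?P)"
    using C by (intro Max_ge) auto
  finally have nonneg: "0 \<le> Max (?g ` ?P)" .
  have "Pow (crit n) = insert {} ?P" by blast
  moreover have "min (minover y A) (\<mu> A) = ?g A" if "A \<noteq> {}" for A
    using that by (simp add: minover_def)
  ultimately have "(\<lambda>A. min (minover y A) (\<mu> A)) ` Pow (crit n) = insert 0 (?g ` ?P)"
    using cap by (simp add: capacity_def minover_def)
  then have "sugeno n \<mu> y = max 0 (Max (?g ` ?P))"
    unfolding sugeno_def using C by (subst Max_insert[symmetric]) auto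
  with nonneg show ?thesis by simp
qed

lemma min_minover_le_max_complement:
  assumes cap: "capacity L n \<mu>" and A: "A \<subseteq> crit n" and B: "B \<subset> crit n"
  shows "min (minover y A) (\<mu> A) \<le> max (Max (y ` (crit n - B))) (\<mu> B)"
proof (cases "A \<subseteq> B")
  case True
  with cap B have "\<mu> A \<le> \<mu> B" by (blast intro: capacity_mono)
  then show ?thesis by linarith
next
  case False
  then obtain i where i: "i \<in> A" "i \<notin> B" by auto
  have "minover y A \<le> y i"
    using i finite_subset[OF A] by (auto simp: minover_def)
  also have "\<dots> \<le> Max (y ` (crit n - B))"
    using i A by (intro Max_ge) auto
  finally show ?thesis by linarith
qed

lemma ex_proper_subset_max_le_sugeno:
  assumes cap: "capacity L n \<mu>" and y: "\<forall>i\<in>crit n. y i \<le> 1"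
  shows "\<exists>B\<subset>crit n. max (Max (y ` (crit n - B))) (\<mu> B) \<le> sugeno n \<mu> y"
proof -
  let ?s = "sugeno n \<mu> y"
  define B where "B = {i \<in> crit n. ?s < y i}"
  have "B \<noteq> crit n"
  proof
    assume "B = crit n"
    then have "?s < minover y (crit n)"
      using capacity_crit_nonempty[OF cap] by (auto simp: minover_def B_def)
    moreover have "minover y (crit n) \<le> 1"
      using capacity_crit_nonempty[OF cap] y by (auto simp: minover_def Min_le_iff)
    ultimately show False
      using min_minover_le_sugeno[of "crit n" n y \<mu>] cap by (simp add: capacity_def)
  qed
  then have B: "B \<subset> crit n" by (auto simp: B_def)
  have \<mu>_le: "\<mu> B \<le> ?s"
  proof (cases "B = {}")
    case True
    then show ?thesis
      using min_minover_le_sugeno[of "{}" n y \<mu>] cap by (simp add: capacity_def minover_def)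
  next
    case False
    have "?s < Min (y ` B)"
      using False by (subst Min_gr_iff) (auto simp: B_def)
    then have "?s < minover y B" using False by (simp add: minover_def)
    with min_minover_le_sugeno[of B n y \<mu>] B show ?thesis by (simp add: min_le_iff_disj)
  qed
  have "\<forall>i\<in>crit n - B. y i \<le> ?s" by (auto simp: B_def)
  then have "Max (y ` (crit n - B)) \<le> ?s"
    using B by (intro Max.boundedI) auto
  with \<mu>_le B show ?thesis by (intro exI[of _ B]) simp
qed

lemma sugeno_eq_Min_proper:
  assumes cap: "capacity L n \<mu>" and y: "\<forall>i\<in>crit n. y i \<le> 1"
  shows "sugeno n \<mu> y = Min ((\<lambda>B. max (Max (y ` (crit n - B))) (\<mu> B)) ` {B. B \<subset> crit n})"
    (is "?s = Min (?G ` ?Q)")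
proof (rule antisym)
  have fin: "finite ?Q" by (simp add: psubset_eq)
  obtain A where A: "A \<subseteq> crit n" "?s = min (minover y A) (\<mu> A)"
    by (rule sugeno_attained)
  have "?s \<le> ?G B" if "B \<in> ?Q" for B
    using min_minover_le_max_complement[OF cap A(1)] that A(2) by simp
  moreover have "{} \<in> ?Q" using capacity_crit_nonempty[OF cap] by blast
  ultimately show "?s \<le> Min (?G ` ?Q)"
    using fin by (intro Min.boundedI) auto
  obtain B where "B \<subset> crit n" "?G B \<le> ?s"
    using ex_proper_subset_max_le_sugeno[OF cap y] by blast
  moreover have "Min (?G ` ?Q) \<le> ?G B"
    using fin calculation(1) by (intro Min_le) auto
  ultimately show "Min (?G ` ?Q) \<le> ?s" by linarith
qed

lemma goedel_residual_eq_1: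
  assumes "finite K" "K \<noteq> {}" "\<forall>k\<in>K. a k A \<le> \<alpha> k"
  shows "goedel_residual K a \<alpha> A = 1"
proof -
  have "\<forall>k\<in>K. goedel_imp (a k A) (\<alpha> k) = 1"
    using assms(3) by (simp add: goedel_imp_def)
  then have "(\<lambda>k. goedel_imp (a k A) (\<alpha> k)) ` K = {1}"
    using assms(2) by auto
  then show ?thesis by (simp add: goedel_residual_def)
qed

lemma eps_residual_eq_0:
  assumes "finite K" "K \<noteq> {}" "\<forall>k\<in>K. \<alpha> k \<le> a k B"
  shows "eps_residual K a \<alpha> B = 0"
proof -
  have "\<forall>k\<in>K. eps_prod (a k B) (\<alpha> k) = 0"
    using assms(3) by (auto simp: eps_prod_def)
  then have "(\<lambda>k. eps_prod (a k B) (\<alpha> k)) ` K = {0}"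
    using assms(2) by auto
  then show ?thesis by (simp add: eps_residual_def)
qed

lemma mkA_antimono: "A \<noteq> {} \<Longrightarrow> A \<subseteq> B \<Longrightarrow> finite B \<Longrightarrow> mkA x k B \<le> mkA x k A"
  unfolding mkA_def by (intro Min_antimono) auto

lemma gammakA_antimono: "A \<subseteq> B \<Longrightarrow> B \<subset> crit n \<Longrightarrow> gammakA n x k B \<le> gammakA n x k A"
  unfolding gammakA_def by (intro Max_mono) auto

locale sugeno_training_data =
  fixes L :: "real set" and n N :: nat and x :: "nat \<Rightarrow> nat \<Rightarrow> real" and \<alpha> :: "nat \<Rightarrow> real"
  assumes scale: "scale L" and n_ge_1: "n \<ge> 1" and N_ge_1: "N \<ge> 1"
    and x_in_L: "\<forall>k\<in>{1..N}. \<forall>i\<in>{1..n}. x k i \<in> L"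
    and \<alpha>_in_L: "\<forall>k\<in>{1..N}. \<alpha> k \<in> L"
begin

lemma L_unit_interval: "L \<subseteq> {0..1}" and zero_in_L: "0 \<in> L" and one_in_L: "1 \<in> L"
  using scale by (auto simp: scale_def)

lemma L_nonneg: "a \<in> L \<Longrightarrow> 0 \<le> a" and L_le_1: "a \<in> L \<Longrightarrow> a \<le> 1"
  using L_unit_interval by auto

lemma crit_nonempty: "crit n \<noteq> {}" and samples_nonempty: "{1..N} \<noteq> {}"
  using n_ge_1 N_ge_1 by auto

lemma x_bounds: "k \<in> {1..N} \<Longrightarrow> i \<in> crit n \<Longrightarrow> 0 \<le> x k i \<and> x k i \<le> 1"
  using x_in_L L_unit_interval by fastforce

lemma \<alpha>_bounds: "k \<in> {1..N} \<Longrightarrow> 0 \<le> \<alpha> k \<and> \<alpha> k \<le> 1"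
  using \<alpha>_in_L L_unit_interval by fastforce

lemma e_fun_mem_L: "e_fun N x \<alpha> A \<in> L"
  unfolding e_fun_eq_goedel_residual
  using samples_nonempty \<alpha>_in_L one_in_L by (intro goedel_residual_mem) auto

lemma f_fun_mem_L: "f_fun n N x \<alpha> B \<in> L"
  unfolding f_fun_eq_eps_residual
  using samples_nonempty \<alpha>_in_L zero_in_L by (intro eps_residual_mem) auto

lemma e_fun_mono:
  assumes "A \<noteq> {}" "A \<subseteq> B" "B \<subseteq> crit n"
  shows "e_fun N x \<alpha> A \<le> e_fun N x \<alpha> B"
proof -
  have "mkA x k B \<le> mkA x k A" for k
    using assms finite_subset[OF assms(3)] by (intro mkA_antimono) auto
  then show ?thesis
    unfolding e_fun_eq_goedel_residual using samples_nonempty \<alpha>_bounds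
    by (intro goedel_residual_mono) auto
qed

lemma f_fun_mono:
  assumes "A \<subseteq> B" "B \<subset> crit n"
  shows "f_fun n N x \<alpha> A \<le> f_fun n N x \<alpha> B"
proof -
  have "gammakA n x k B \<le> gammakA n x k A" for k
    using assms by (rule gammakA_antimono)
  then show ?thesis
    unfolding f_fun_eq_eps_residual using samples_nonempty \<alpha>_bounds
    by (intro eps_residual_mono) auto
qed

lemma S_consistent_if_representing:
  assumes cap: "capacity L n \<mu>" and rep: "\<forall>k\<in>{1..N}. sugeno n \<mu> (x k) = \<alpha> k"
  shows "S_consistent L n N x \<alpha> \<and> e_fun N x \<alpha> (crit n) = 1"
proof
  have "Max ((\<lambda>A. min (mkA x k A) (\<mu> A)) ` {A. A \<subseteq> crit n \<and> A \<noteq> {}}) = \<alpha> k"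
    if k: "k \<in> {1..N}" for k
  proof -
    have "sugeno n \<mu> (x k) = Max ((\<lambda>A. min (mkA x k A) (\<mu> A)) ` {A. A \<subseteq> crit n \<and> A \<noteq> {}})"
      using sugeno_eq_Max_nonempty[OF cap, of "x k"] x_bounds[OF k] by (simp add: mkA_def)
    with rep k show ?thesis by simp
  qed
  moreover have "\<forall>A. A \<subseteq> crit n \<and> A \<noteq> {} \<longrightarrow> \<mu> A \<in> L"
    using cap by (simp add: capacity_def)
  ultimately show "S_consistent L n N x \<alpha>"
    unfolding S_consistent_def by blast
  have "mkA x k (crit n) \<le> \<alpha> k" if k: "k \<in> {1..N}" for k
  proof -
    have "mkA x k (crit n) = minover (x k) (crit n)"
      using crit_nonempty by (simp add: mkA_def minover_def)
    moreover have "minover (x k) (crit n) \<le> 1"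
      using crit_nonempty x_bounds[OF k] by (auto simp: minover_def Min_le_iff)
    ultimately show ?thesis
      using min_minover_le_sugeno[of "crit n" n "x k" \<mu>] cap rep k by (simp add: capacity_def)
  qed
  then show "e_fun N x \<alpha> (crit n) = 1"
    unfolding e_fun_eq_goedel_residual using samples_nonempty by (intro goedel_residual_eq_1) auto
qed

lemma representing_if_S_consistent:
  assumes "S_consistent L n N x \<alpha>" and e_crit: "e_fun N x \<alpha> (crit n) = 1"
  shows "\<exists>\<mu>. capacity L n \<mu> \<and> (\<forall>k\<in>{1..N}. sugeno n \<mu> (x k) = \<alpha> k)"
proof -
  let ?P = "{A. A \<subseteq> crit n \<and> A \<noteq> {}}"
  let ?e = "e_fun N x \<alpha>"
  obtain \<xi> where \<xi>_L: "\<forall>A. A \<subseteq> crit n \<and> A \<noteq> {} \<longrightarrow> \<xi> A \<in> L"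
    and sol: "\<forall>k\<in>{1..N}. Max ((\<lambda>A. min (mkA x k A) (\<xi> A)) ` ?P) = \<alpha> k"
    using assms(1) unfolding S_consistent_def by auto
  have "finite ?P" "?P \<noteq> {}" using crit_nonempty by auto
  moreover have "\<forall>A\<in>?P. \<xi> A \<le> 1" using \<xi>_L L_le_1 by blast
  ultimately have e_sol: "\<forall>k\<in>{1..N}. Max ((\<lambda>A. min (mkA x k A) (?e A)) ` ?P) = \<alpha> k"
    unfolding e_fun_eq_goedel_residual using samples_nonempty
    by (intro goedel_residual_greatest_max_min_solution[OF _ _ _ _ sol]) simp_all
  define \<mu> where "\<mu> A = (if A = {} then 0 else ?e A)" for A
  have cap: "capacity L n \<mu>"
    unfolding capacity_def
  proof (intro conjI allI impI)
    show "\<mu> A \<in> L" for A using e_fun_mem_L zero_in_L by (simp add: \<mu>_def)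
    show "\<mu> {} = 0" by (simp add: \<mu>_def)
    show "\<mu> (crit n) = 1" using crit_nonempty e_crit by (simp add: \<mu>_def)
    show "\<mu> A \<le> \<mu> B" if AB: "A \<subseteq> B" "B \<subseteq> crit n" for A B
    proof (cases "A = {}")
      case True
      have "0 \<le> ?e B" using e_fun_mem_L by (rule L_nonneg)
      with True show ?thesis by (simp add: \<mu>_def)
    next
      case False
      with AB(1) have "B \<noteq> {}" by blast
      with False e_fun_mono[OF False AB] show ?thesis by (simp add: \<mu>_def)
    qed
  qed
  have "sugeno n \<mu> (x k) = \<alpha> k" if k: "k \<in> {1..N}" for k
  proof -
    have "sugeno n \<mu> (x k) = Max ((\<lambda>A. min (mkA x k A) (\<mu> A)) ` ?P)"
      using sugeno_eq_Max_nonempty[OF cap, of "x k"] x_bounds[OF k] by (simp add: mkA_def)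
    also have "(\<lambda>A. min (mkA x k A) (\<mu> A)) ` ?P = (\<lambda>A. min (mkA x k A) (?e A)) ` ?P"
      by (rule image_cong) (simp_all add: \<mu>_def)
    finally show ?thesis using e_sol k by simp
  qed
  with cap show ?thesis by blast
qed

lemma Sigma_consistent_if_representing:
  assumes cap: "capacity L n \<mu>" and rep: "\<forall>k\<in>{1..N}. sugeno n \<mu> (x k) = \<alpha> k"
  shows "Sigma_consistent L n N x \<alpha> \<and> f_fun n N x \<alpha> {} = 0"
proof
  let ?Q = "{B. B \<subset> crit n}"
  have sol: "Min ((\<lambda>B. max (gammakA n x k B) (\<mu> B)) ` ?Q) = \<alpha> k"
    if k: "k \<in> {1..N}" for k
  proof -
    have "sugeno n \<mu> (x k) = Min ((\<lambda>B. max (gammakA n x k B) (\<mu> B)) ` ?Q)"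
      using sugeno_eq_Min_proper[OF cap, of "x k"] x_bounds[OF k] by (simp add: gammakA_def)
    with rep k show ?thesis by simp
  qed
  moreover have "\<forall>B. B \<subset> crit n \<longrightarrow> \<mu> B \<in> L"
    using cap by (simp add: capacity_def)
  ultimately show "Sigma_consistent L n N x \<alpha>"
    unfolding Sigma_consistent_def by blast
  have "\<alpha> k \<le> gammakA n x k {}" if k: "k \<in> {1..N}" for k
  proof -
    have "{} \<in> ?Q" using crit_nonempty by blast
    then have "\<alpha> k \<le> max (gammakA n x k {}) (\<mu> {})"
      unfolding sol[OF k, symmetric] by (intro Min_le) (auto simp: psubset_eq)
    moreover have "0 \<le> gammakA n x k {}"
      using crit_nonempty x_bounds[OF k] by (auto simp: gammakA_def Max_ge_iff)
    ultimately show ?thesis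
      using cap by (simp add: capacity_def)
  qed
  then show "f_fun n N x \<alpha> {} = 0"
    unfolding f_fun_eq_eps_residual using samples_nonempty by (intro eps_residual_eq_0) auto
qed

lemma representing_if_Sigma_consistent:
  assumes "Sigma_consistent L n N x \<alpha>" and f_empty: "f_fun n N x \<alpha> {} = 0"
  shows "\<exists>\<mu>. capacity L n \<mu> \<and> (\<forall>k\<in>{1..N}. sugeno n \<mu> (x k) = \<alpha> k)"
proof -
  let ?Q = "{B. B \<subset> crit n}"
  let ?f = "f_fun n N x \<alpha>"
  obtain \<xi> where \<xi>_L: "\<forall>B. B \<subset> crit n \<longrightarrow> \<xi> B \<in> L"
    and sol: "\<forall>k\<in>{1..N}. Min ((\<lambda>B. max (gammakA n x k B) (\<xi> B)) ` ?Q) = \<alpha> k"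
    using assms(1) unfolding Sigma_consistent_def by auto
  have "finite ?Q" "?Q \<noteq> {}" using crit_nonempty by (auto simp: psubset_eq)
  moreover have "\<forall>B\<in>?Q. 0 \<le> \<xi> B" using \<xi>_L L_nonneg by blast
  ultimately have f_sol: "\<forall>k\<in>{1..N}. Min ((\<lambda>B. max (gammakA n x k B) (?f B)) ` ?Q) = \<alpha> k"
    unfolding f_fun_eq_eps_residual using samples_nonempty
    by (intro eps_residual_least_min_max_solution[OF _ _ _ _ sol]) simp_all
  define \<mu> where "\<mu> B = (if B = crit n then 1 else ?f B)" for B
  have cap: "capacity L n \<mu>"
    unfolding capacity_def
  proof (intro conjI allI impI)
    show "\<mu> A \<in> L" for A using f_fun_mem_L one_in_L by (simp add: \<mu>_def)
    show "\<mu> {} = 0" using crit_nonempty f_empty by (simp add: \<mu>_def)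
    show "\<mu> (crit n) = 1" by (simp add: \<mu>_def)
    show "\<mu> A \<le> \<mu> B" if AB: "A \<subseteq> B" "B \<subseteq> crit n" for A B
    proof (cases "B = crit n")
      case True
      have "?f A \<le> 1" using f_fun_mem_L by (rule L_le_1)
      with True show ?thesis by (simp add: \<mu>_def)
    next
      case False
      with AB have "B \<subset> crit n" "A \<noteq> crit n" by auto
      with False f_fun_mono[OF AB(1)] show ?thesis by (simp add: \<mu>_def)
    qed
  qed
  have "sugeno n \<mu> (x k) = \<alpha> k" if k: "k \<in> {1..N}" for k
  proof -
    have "sugeno n \<mu> (x k) = Min ((\<lambda>B. max (gammakA n x k B) (\<mu> B)) ` ?Q)"
      using sugeno_eq_Min_proper[OF cap, of "x k"] x_bounds[OF k] by (simp add: gammakA_def)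
    also have "(\<lambda>B. max (gammakA n x k B) (\<mu> B)) ` ?Q = (\<lambda>B. max (gammakA n x k B) (?f B)) ` ?Q"
      by (rule image_cong) (simp_all add: \<mu>_def)
    finally show ?thesis using f_sol k by simp
  qed
  with cap show ?thesis by blast
qed

end

theorem theorem1:
  fixes L :: "real set" and n N :: nat
    and x :: "nat \<Rightarrow> nat \<Rightarrow> real" and \<alpha> :: "nat \<Rightarrow> real"
  assumes "scale L"
    and "n \<ge> 1" and "N \<ge> 1"
    and "\<forall>k\<in>{1..N}. \<forall>i\<in>{1..n}. x k i \<in> L"
    and "\<forall>k\<in>{1..N}. \<alpha> k \<in> L"
  shows "((\<exists>\<mu>. capacity L n \<mu> \<and> (\<forall>k\<in>{1..N}. sugeno n \<mu> (x k) = \<alpha> k))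
            \<longleftrightarrow> (S_consistent L n N x \<alpha> \<and> e_fun N x \<alpha> {1..n} = 1))
       \<and> ((\<exists>\<mu>. capacity L n \<mu> \<and> (\<forall>k\<in>{1..N}. sugeno n \<mu> (x k) = \<alpha> k))
            \<longleftrightarrow> (Sigma_consistent L n N x \<alpha> \<and> f_fun n N x \<alpha> {} = 0))"
proof -
  interpret sugeno_training_data L n N x \<alpha>
    using assms by unfold_locales
  show ?thesis
    using S_consistent_if_representing representing_if_S_consistent
      Sigma_consistent_if_representing representing_if_Sigma_consistent
    by blast
qed

end
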